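(* Let $G$ be a graph with at least one cut-vertex. Let $\beta$ be the number of vertices of a largest block of $G$ and $\tilde{\Delta}$ the maximum degree of a cut-vertex of $G$ in its block-cutpoint graph. Then $\Gamma(G)\le(\beta-1)\tilde{\Delta}+1$.
   Context: A Grundy-coloring of $G$ is a proper coloring with nonempty color classes $C_1,\ldots,C_k$ such that for $i<j$ each vertex of $C_j$ has a neighbor in $C_i$; $\Gamma(G)$ is the maximum number of colors of a Grundy-coloring. A cut-vertex is a vertex whose removal increases the number of connected components. A block is a maximal 2-connected subgraph or a bridge (as a $K_2$). The block-cutpoint graph is the bipartite graph whose parts are the cut-vertices and the blocks of $G$, a cut-vertex $v$ being adjacent to a block $B$ iff $v\in B$. *)

theory Defs
  imports Main
begin

definition graph :: "'a set \<Rightarrow> ('a \<Rightarrow> 'a \<Rightarrow> bool) \<Rightarrow> bool" where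
  "graph V E \<longleftrightarrow> finite V \<and> (\<forall>u v. E u v \<longrightarrow> u \<in> V \<and> v \<in> V)
     \<and> (\<forall>u v. E u v \<longrightarrow> E v u) \<and> (\<forall>v. \<not> E v v)"

definition reach_in :: "('a \<Rightarrow> 'a \<Rightarrow> bool) \<Rightarrow> 'a set \<Rightarrow> 'a \<Rightarrow> 'a \<Rightarrow> bool" where
  "reach_in E S x y \<longleftrightarrow> x \<in> S \<and> y \<in> S \<and> (\<lambda>u v. E u v \<and> u \<in> S \<and> v \<in> S)\<^sup>*\<^sup>* x y"

definition components :: "('a \<Rightarrow> 'a \<Rightarrow> bool) \<Rightarrow> 'a set \<Rightarrow> 'a set set" where
  "components E S = {{y. reach_in E S x y} | x. x \<in> S}"

definition cut_vertex :: "'a set \<Rightarrow> ('a \<Rightarrow> 'a \<Rightarrow> bool) \<Rightarrow> 'a \<Rightarrow> bool" where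
  "cut_vertex V E v \<longleftrightarrow> v \<in> V \<and> card (components E (V - {v})) > card (components E V)"

definition connected_in :: "('a \<Rightarrow> 'a \<Rightarrow> bool) \<Rightarrow> 'a set \<Rightarrow> bool" where
  "connected_in E S \<longleftrightarrow> S \<noteq> {} \<and> (\<forall>x\<in>S. \<forall>y\<in>S. reach_in E S x y)"

text \<open>Vertex sets inducing a 2-connected subgraph, or a K2 (an edge).
  Blocks are the maximal such sets: maximal 2-connected subgraphs, or bridges.\<close>
definition nonsep :: "'a set \<Rightarrow> ('a \<Rightarrow> 'a \<Rightarrow> bool) \<Rightarrow> 'a set \<Rightarrow> bool" where
  "nonsep V E S \<longleftrightarrow> S \<subseteq> V \<and> card S \<ge> 2 \<and> connected_in E S
     \<and> (\<forall>v\<in>S. connected_in E (S - {v}))"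

definition is_block :: "'a set \<Rightarrow> ('a \<Rightarrow> 'a \<Rightarrow> bool) \<Rightarrow> 'a set \<Rightarrow> bool" where
  "is_block V E B \<longleftrightarrow> nonsep V E B \<and> (\<forall>S. nonsep V E S \<and> B \<subseteq> S \<longrightarrow> S = B)"

text \<open>Degree of a cut-vertex v in the block-cutpoint graph: number of blocks containing v.\<close>
definition bc_degree :: "'a set \<Rightarrow> ('a \<Rightarrow> 'a \<Rightarrow> bool) \<Rightarrow> 'a \<Rightarrow> nat" where
  "bc_degree V E v = card {B. is_block V E B \<and> v \<in> B}"

definition max_block_size :: "'a set \<Rightarrow> ('a \<Rightarrow> 'a \<Rightarrow> bool) \<Rightarrow> nat" where
  "max_block_size V E = Max {card B | B. is_block V E B}"

definition max_cut_bc_degree :: "'a set \<Rightarrow> ('a \<Rightarrow> 'a \<Rightarrow> bool) \<Rightarrow> nat" where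
  "max_cut_bc_degree V E = Max {bc_degree V E v | v. cut_vertex V E v}"

definition grundy_coloring :: "'a set \<Rightarrow> ('a \<Rightarrow> 'a \<Rightarrow> bool) \<Rightarrow> ('a \<Rightarrow> nat) \<Rightarrow> nat \<Rightarrow> bool" where
  "grundy_coloring V E c k \<longleftrightarrow>
     (\<forall>v\<in>V. c v \<in> {1..k})
   \<and> (\<forall>u\<in>V. \<forall>v\<in>V. E u v \<longrightarrow> c u \<noteq> c v)
   \<and> (\<forall>i\<in>{1..k}. \<exists>v\<in>V. c v = i)
   \<and> (\<forall>v\<in>V. \<forall>i. 1 \<le> i \<and> i < c v \<longrightarrow> (\<exists>u\<in>V. E v u \<and> c u = i))"

definition grundy_number :: "'a set \<Rightarrow> ('a \<Rightarrow> 'a \<Rightarrow> bool) \<Rightarrow> nat" where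
  "grundy_number V E = Max {k. \<exists>c. grundy_coloring V E c k}"

end

theory Submission
  imports Defs "HOL-Library.Transitive_Closure_Table"
begin

text \<open>
  A vertex w of the top colour k of a Grundy colouring has neighbours of all k - 1 smaller
  colours. Every edge lies in a block, so the neighbours of w lie in the blocks through w, each
  of which contributes at most \<beta> - 1 of them. Hence k - 1 is at most \<beta> - 1 times the number
  of blocks through w. For a cut-vertex this number is at most \<Delta> by definition; for any other
  vertex v it is at most 1, because two blocks through v, joined by a path avoiding v, would
  together with that path form a larger 2-connected set.
\<close>

lemma graph_symp: "graph V E \<Longrightarrow> symp E"
  by (auto simp: graph_def intro: sympI)

lemma finite_neighbours: "graph V E \<Longrightarrow> finite {u. E v u}"
  by (rule finite_subset[of _ V]) (auto simp: graph_def)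

section \<open>Reachability and walks\<close>

lemma reach_in_refl: "x \<in> S \<Longrightarrow> reach_in E S x x"
  by (simp add: reach_in_def)

lemma reach_in_edge: "E x y \<Longrightarrow> x \<in> S \<Longrightarrow> y \<in> S \<Longrightarrow> reach_in E S x y"
  by (auto simp: reach_in_def)

lemma reach_in_trans: "reach_in E S x y \<Longrightarrow> reach_in E S y z \<Longrightarrow> reach_in E S x z"
  by (auto simp: reach_in_def)

lemma reach_in_mono:
  assumes "reach_in E S x y" and "S \<subseteq> T"
  shows "reach_in E T x y"
proof -
  have "(\<lambda>u v. E u v \<and> u \<in> S \<and> v \<in> S) \<le> (\<lambda>u v. E u v \<and> u \<in> T \<and> v \<in> T)"
    using assms(2) by auto
  then show ?thesis
    using assms by (auto simp: reach_in_def dest: rtranclp_mono[THEN predicate2D])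
qed

lemma reach_in_sym:
  assumes "symp E" and "reach_in E S x y"
  shows "reach_in E S y x"
proof -
  have "symp (\<lambda>u v. E u v \<and> u \<in> S \<and> v \<in> S)"
    using assms(1) by (auto intro: sympI dest: sympD)
  then show ?thesis
    using assms(2) symp_rtranclp by (auto simp: reach_in_def dest: sympD)
qed

lemma reach_in_imp_distinct_walk:
  assumes "reach_in E S a b"
  obtains xs where "successively E (a # xs)" "distinct (a # xs)" "last (a # xs) = b"
    "set (a # xs) \<subseteq> S"
proof -
  let ?R = "\<lambda>u v. E u v \<and> u \<in> S \<and> v \<in> S"
  have walk: "successively ?R (x # xs) \<and> last (x # xs) = y" if "rtrancl_path ?R x xs y" for x xs y
    using that by induction (auto simp: successively_Cons)
  obtain ys where "rtrancl_path ?R a ys b"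
    using assms by (auto simp: reach_in_def rtranclp_eq_rtrancl_path)
  then obtain xs where xs: "rtrancl_path ?R a xs b" "distinct (a # xs)"
    by (rule rtrancl_path_distinct)
  have "successively ?R (a # xs)" "last (a # xs) = b"
    using walk[OF xs(1)] by auto
  moreover have "set (x # ys) \<subseteq> S" if "successively ?R (x # ys)" "x \<in> S" for x ys
    using that by (induction ys arbitrary: x) auto
  moreover have "a \<in> S"
    using assms by (simp add: reach_in_def)
  ultimately show thesis
    using that xs(2) successively_mono[of ?R "a # xs" E] by auto
qed

lemma connected_in_singleton: "connected_in E {x}"
  by (simp add: connected_in_def reach_in_refl)

lemma connected_in_Un:
  assumes "symp E" "connected_in E S" "connected_in E T" "z \<in> S" "z \<in> T"
  shows "connected_in E (S \<union> T)"
proof -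
  have to_z: "reach_in E (S \<union> T) x z" if "x \<in> S \<union> T" for x
  proof (cases "x \<in> S")
    case True
    then have "reach_in E S x z"
      using assms(2,4) by (simp add: connected_in_def)
    then show ?thesis by (rule reach_in_mono) auto
  next
    case False
    then have "reach_in E T x z"
      using that assms(3,5) by (simp add: connected_in_def)
    then show ?thesis by (rule reach_in_mono) auto
  qed
  have "reach_in E (S \<union> T) x y" if "x \<in> S \<union> T" "y \<in> S \<union> T" for x y
    using reach_in_trans[OF to_z[OF that(1)] reach_in_sym[OF assms(1) to_z[OF that(2)]]] .
  then show ?thesis
    using assms(4) by (auto simp: connected_in_def)
qed

lemma connected_in_edge:
  assumes "symp E" "E x y"
  shows "connected_in E {x, y}"
proof -
  have "reach_in E {x, y} x y"
    using assms(2) by (simp add: reach_in_edge)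
  then show ?thesis
    using reach_in_sym[OF assms(1)] by (auto simp: connected_in_def reach_in_refl)
qed

lemma connected_in_walk:
  assumes "symp E" "successively E (x # xs)"
  shows "connected_in E (set (x # xs))"
  using assms(2)
proof (induction xs arbitrary: x)
  case Nil
  then show ?case by (simp add: connected_in_singleton)
next
  case (Cons y ys)
  then have "E x y" "successively E (y # ys)"
    by auto
  then have "connected_in E ({x, y} \<union> set (y # ys))"
    by (intro connected_in_Un[OF assms(1) connected_in_edge[OF assms(1)] Cons.IH, where z = y]) auto
  moreover have "{x, y} \<union> set (y # ys) = set (x # y # ys)"
    by auto
  ultimately show ?case by simp
qed

lemma connected_in_Un_walk:
  assumes "symp E" "connected_in E X" "successively E xs" "xs = [] \<or> set xs \<inter> X \<noteq> {}"
  shows "connected_in E (X \<union> set xs)"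
proof (cases xs)
  case Nil
  then show ?thesis using assms(2) by simp
next
  case (Cons y ys)
  then show ?thesis
    using assms connected_in_Un[OF assms(1,2) connected_in_walk[OF assms(1)]] by blast
qed

lemma connected_in_Un_walk_minus:
  assumes "symp E" "connected_in E X" "successively E P" "distinct P" "P \<noteq> []"
    and "hd P \<in> insert w X" "last P \<in> insert w X"
  shows "connected_in E (X \<union> (set P - {w}))"
proof (cases "w \<in> set P")
  case False
  then have "hd P \<in> X \<inter> set P"
    using assms(5,6) by auto
  then show ?thesis
    using False connected_in_Un_walk[OF assms(1-3)] by auto
next
  case True
  then obtain ys zs where P: "P = ys @ w # zs"
    by (meson split_list)
  have w: "w \<notin> set ys" "w \<notin> set zs"
    using assms(4) P by auto
  have walks: "successively E ys" "successively E zs"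
    using assms(3) P by (auto simp: successively_append_iff successively_Cons)
  have "ys = [] \<or> hd ys \<in> X"
    using assms(6) P w(1) by (cases ys) auto
  then have "connected_in E (X \<union> set ys)"
    by (intro connected_in_Un_walk[OF assms(1,2) walks(1)]) (auto dest: hd_in_set)
  moreover have "zs = [] \<or> last zs \<in> X \<union> set ys"
    using assms(7) P w(2) by (cases zs rule: rev_cases) auto
  ultimately have "connected_in E (X \<union> set ys \<union> set zs)"
    by (intro connected_in_Un_walk[OF assms(1) _ walks(2)]) (auto dest: last_in_set)
  moreover have "set P - {w} = set ys \<union> set zs"
    using P w by auto
  ultimately show ?thesis
    by (simp add: Un_assoc)
qed

section \<open>Nonseparable sets and blocks\<close>

lemma nonsep_finite: "nonsep V E S \<Longrightarrow> finite S"
  by (auto simp: nonsep_def intro: card_ge_0_finite)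

lemma nonsep_obtain_other:
  assumes "nonsep V E S"
  obtains a where "a \<in> S" "a \<noteq> v"
proof -
  have "\<not> S \<subseteq> {v}"
    using assms card_mono[of "{v}" S] by (auto simp: nonsep_def)
  then show thesis
    using that by blast
qed

lemma nonsep_connected_in_delete: "nonsep V E S \<Longrightarrow> connected_in E (S - {w})"
  unfolding nonsep_def by (cases "w \<in> S") simp_all

lemma nonsep_edge:
  assumes "graph V E" "E u v"
  shows "nonsep V E {u, v}"
proof -
  have uv: "u \<in> V" "v \<in> V" "u \<noteq> v"
    using assms by (auto simp: graph_def)
  have pair: "connected_in E {u, v}"
    using graph_symp[OF assms(1)] assms(2) by (rule connected_in_edge)
  have "connected_in E ({u, v} - {w})" for w
    using uv(3) pair connected_in_singleton[of E u] connected_in_singleton[of E v]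
    by (cases "w = u"; cases "w = v") (simp_all add: insert_Diff_if)
  then show ?thesis
    using uv pair by (simp add: nonsep_def)
qed

lemma nonsep_subset_block:
  assumes "finite V" "nonsep V E S"
  obtains B where "is_block V E B" "S \<subseteq> B"
proof -
  have "{T. nonsep V E T} \<subseteq> Pow V"
    by (auto simp: nonsep_def)
  then have "finite {T. nonsep V E T}"
    using assms(1) by (rule finite_subset[OF _ finite_Pow_iff[THEN iffD2]])
  moreover have "S \<in> {T. nonsep V E T}"
    using assms(2) by simp
  ultimately obtain B where "nonsep V E B" "S \<subseteq> B" "\<forall>T. nonsep V E T \<longrightarrow> B \<subseteq> T \<longrightarrow> B = T"
    by (auto dest: finite_has_maximal2)
  moreover from this(1,3) have "is_block V E B"
    unfolding is_block_def by blast
  ultimately show thesis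
    using that by blast
qed

lemma edge_in_block:
  assumes "graph V E" "E u v"
  obtains B where "is_block V E B" "u \<in> B" "v \<in> B"
proof -
  have "finite V"
    using assms(1) by (simp add: graph_def)
  then obtain B where "is_block V E B" "{u, v} \<subseteq> B"
    using nonsep_edge[OF assms] by (rule nonsep_subset_block)
  then show thesis
    using that by blast
qed

lemma block_vertex_has_neighbour:
  assumes "is_block V E B" "v \<in> B"
  obtains u where "E v u"
proof -
  have ns: "nonsep V E B"
    using assms(1) by (simp add: is_block_def)
  then obtain a where "a \<in> B" "a \<noteq> v"
    by (rule nonsep_obtain_other)
  moreover have "reach_in E B v a"
    using ns assms(2) \<open>a \<in> B\<close> by (simp add: nonsep_def connected_in_def)
  ultimately show thesis
    using that by (auto simp: reach_in_def elim: converse_rtranclpE)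
qed

lemma finite_blocks: "finite V \<Longrightarrow> finite {B. is_block V E B}"
  by (rule finite_subset[of _ "Pow V"]) (auto simp: is_block_def nonsep_def)

lemma finite_blocks_containing: "finite V \<Longrightarrow> finite {B. is_block V E B \<and> v \<in> B}"
  by (rule finite_subset[OF _ finite_blocks]) auto

lemma card_block_le_max_block_size:
  assumes "finite V" "is_block V E B"
  shows "card B \<le> max_block_size V E"
proof -
  have "finite {card B | B. is_block V E B}"
    using finite_blocks[OF assms(1)] by (simp add: setcompr_eq_image)
  then show ?thesis
    unfolding max_block_size_def by (rule Max_ge) (use assms(2) in blast)
qed

lemma nonsep_Un_walk:
  assumes "symp E" "nonsep V E B1" "nonsep V E B2" "v \<in> B1" "v \<in> B2"
    and "successively E P" "distinct P" "P \<noteq> []" "hd P \<in> B1" "last P \<in> B2"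
    and "set P \<subseteq> V - {v}"
  shows "nonsep V E (B1 \<union> B2 \<union> set P)"
proof -
  let ?S = "B1 \<union> B2 \<union> set P"
  have ends: "hd P \<in> set P" "last P \<in> set P"
    using assms(8) by auto
  have "?S \<subseteq> V"
    using assms(2,3,11) by (auto simp: nonsep_def)
  moreover have "2 \<le> card ?S"
  proof -
    have "card B1 \<le> card ?S"
      using nonsep_finite[OF assms(2)] nonsep_finite[OF assms(3)] by (intro card_mono) auto
    then show ?thesis
      using assms(2) by (simp add: nonsep_def)
  qed
  moreover have "connected_in E ?S"
  proof -
    have "connected_in E (B1 \<union> B2)"
      using assms(1-5) by (intro connected_in_Un) (auto simp: nonsep_def)
    then show ?thesis
      using assms(9) ends by (intro connected_in_Un_walk[OF assms(1) _ assms(6)]) auto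
  qed
  moreover have "connected_in E (?S - {w})" for w
  proof (cases "w = v")
    case True
    have "connected_in E ((B1 - {v}) \<union> set P)"
      using assms(9,11) ends
      by (intro connected_in_Un_walk[OF assms(1) nonsep_connected_in_delete[OF assms(2)] assms(6)])
        auto
    then have "connected_in E ((B1 - {v}) \<union> set P \<union> (B2 - {v}))"
      using assms(10,11) ends
      by (intro connected_in_Un[OF assms(1) _ nonsep_connected_in_delete[OF assms(3)],
            where z = "last P"]) auto
    moreover have "?S - {w} = (B1 - {v}) \<union> set P \<union> (B2 - {v})"
      using True assms(11) by auto
    ultimately show ?thesis
      by simp
  next
    case False
    let ?X = "(B1 - {w}) \<union> (B2 - {w})"
    have "connected_in E ?X"
      using False assms(4,5)
      by (intro connected_in_Un[OF assms(1) nonsep_connected_in_delete[OF assms(2)]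
            nonsep_connected_in_delete[OF assms(3)], where z = v]) auto
    then have "connected_in E (?X \<union> (set P - {w}))"
      using assms(9,10) by (intro connected_in_Un_walk_minus[OF assms(1) _ assms(6-8)]) auto
    moreover have "?S - {w} = ?X \<union> (set P - {w})"
      by auto
    ultimately show ?thesis
      by simp
  qed
  ultimately show ?thesis
    by (simp add: nonsep_def)
qed

section \<open>Cut-vertices\<close>

lemma components_eq_image: "components E S = (\<lambda>x. {y. reach_in E S x y}) ` S"
  unfolding components_def by blast

lemma reach_in_component_eq:
  assumes "symp E" "reach_in E S x y"
  shows "{z. reach_in E S x z} = {z. reach_in E S y z}"
  using reach_in_trans[OF assms(2)] reach_in_trans[OF reach_in_sym[OF assms]] by blast

lemma cut_vertex_has_neighbour:
  assumes "graph V E" "cut_vertex V E v"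
  obtains u where "E v u"
proof -
  have "\<exists>u. E v u"
  proof (rule ccontr)
    assume "\<nexists>u. E v u"
    then have isolated: "\<not> E v u" "\<not> E u v" for u
      using graph_symp[OF assms(1)] by (auto dest: sympD)
    have same_edges: "(\<lambda>u w. E u w \<and> u \<in> V - {v} \<and> w \<in> V - {v}) = (\<lambda>u w. E u w \<and> u \<in> V \<and> w \<in> V)"
      using isolated by (intro ext) blast
    have avoids_v: "y \<noteq> v" if "(\<lambda>u w. E u w \<and> u \<in> V \<and> w \<in> V)\<^sup>*\<^sup>* x y" "x \<noteq> v" for x y
      using that(1) by (cases rule: rtranclp.cases) (use that(2) isolated in auto)
    have "{y. reach_in E (V - {v}) x y} = {y. reach_in E V x y}" if "x \<in> V - {v}" for x
      using that avoids_v unfolding reach_in_def same_edges by blast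
    then have "components E (V - {v}) \<subseteq> components E V"
      unfolding components_eq_image by blast
    moreover have "finite (components E V)"
      using assms(1) by (simp add: components_eq_image graph_def)
    ultimately have "card (components E (V - {v})) \<le> card (components E V)"
      by (rule card_mono[rotated])
    then show False
      using assms(2) by (simp add: cut_vertex_def)
  qed
  then show thesis
    using that by blast
qed

lemma Union_components_mono:
  assumes "symp E" "S \<subseteq> T" "x \<in> S"
  shows "(\<Union>y\<in>{y. reach_in E S x y}. {z. reach_in E T y z}) = {z. reach_in E T x z}"
proof -
  have "{z. reach_in E T y z} = {z. reach_in E T x z}" if "reach_in E S x y" for y
    using reach_in_component_eq[OF assms(1) reach_in_mono[OF that assms(2)]] by simp
  moreover have "reach_in E S x x"
    using assms(3) by (rule reach_in_refl)
  ultimately show ?thesis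
    by blast
qed

text \<open>
  Mapping each component of V - {v} to the union of the components of V meeting it is onto,
  because v joins the component of its neighbour u; as v is not a cut-vertex, the map is
  injective, so x and y stay in one component.
\<close>
lemma reach_in_delete_non_cut_vertex:
  assumes "graph V E" "\<not> cut_vertex V E v" "E v u"
    and "x \<in> V - {v}" "y \<in> V - {v}" "reach_in E V x y"
  shows "reach_in E (V - {v}) x y"
proof -
  have sym: "symp E"
    using assms(1) by (rule graph_symp)
  have uv: "u \<in> V - {v}" "v \<in> V"
    using assms(1,3) by (auto simp: graph_def)
  define C where "C = (\<lambda>x. {y. reach_in E V x y})"
  define C' where "C' = (\<lambda>x. {y. reach_in E (V - {v}) x y})"
  define F where "F = (\<lambda>K. \<Union> (C ` K))"
  have F_C': "F (C' x) = C x" if "x \<in> V - {v}" for x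
    using Union_components_mono[OF sym _ that] by (simp add: F_def C_def C'_def)
  have "C v = C u"
    unfolding C_def using uv assms(3) by (intro reach_in_component_eq[OF sym] reach_in_edge) auto
  have "F ` components E (V - {v}) = (\<lambda>x. F (C' x)) ` (V - {v})"
    by (simp add: components_eq_image C'_def image_image)
  also have "\<dots> = C ` (V - {v})"
    using F_C' by (rule image_cong[OF refl])
  also have "\<dots> = C ` V"
    using uv \<open>C v = C u\<close> by blast
  finally have onto: "F ` components E (V - {v}) = components E V"
    by (simp add: components_eq_image C_def)
  have fin: "finite (components E (V - {v}))"
    using assms(1) by (simp add: components_eq_image graph_def)
  then have "card (F ` components E (V - {v})) = card (components E (V - {v}))"
    using onto assms(2) uv(2) card_image_le[OF fin, of F] by (simp add: cut_vertex_def)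
  then have "inj_on F (components E (V - {v}))"
    by (rule eq_card_imp_inj_on[OF fin])
  moreover have "F (C' x) = F (C' y)"
    using F_C' assms(4-6) reach_in_component_eq[OF sym] by (simp add: C_def)
  ultimately have "C' x = C' y"
    using assms(4,5) by (auto simp: components_eq_image C'_def dest: inj_onD)
  then show ?thesis
    using assms(5) by (auto simp: C'_def reach_in_refl)
qed

lemma blocks_eq_at_non_cut_vertex:
  assumes "graph V E" "\<not> cut_vertex V E v"
    and "is_block V E B1" "is_block V E B2" "v \<in> B1" "v \<in> B2"
  shows "B1 = B2"
proof -
  have sym: "symp E"
    using assms(1) by (rule graph_symp)
  have ns: "nonsep V E B1" "nonsep V E B2"
    using assms(3,4) by (simp_all add: is_block_def)
  obtain a b where ab: "a \<in> B1" "a \<noteq> v" "b \<in> B2" "b \<noteq> v"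
    using ns by (metis nonsep_obtain_other)
  have "reach_in E B1 a v" "reach_in E B2 v b"
    using ns ab assms(5,6) by (auto simp: nonsep_def connected_in_def)
  then have "reach_in E V a b"
    using ns by (auto simp: nonsep_def intro: reach_in_trans reach_in_mono)
  moreover obtain u where "E v u"
    using assms(3,5) by (rule block_vertex_has_neighbour)
  ultimately have "reach_in E (V - {v}) a b"
    using assms(1,2) ab ns
    by (intro reach_in_delete_non_cut_vertex) (auto simp: nonsep_def)
  then obtain xs where P: "successively E (a # xs)" "distinct (a # xs)" "last (a # xs) = b"
    "set (a # xs) \<subseteq> V - {v}"
    by (rule reach_in_imp_distinct_walk)
  then have "nonsep V E (B1 \<union> B2 \<union> set (a # xs))"
    using ab by (intro nonsep_Un_walk[OF sym ns assms(5,6)]) auto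
  then show ?thesis
    using assms(3,4) unfolding is_block_def by blast
qed

lemma bc_degree_non_cut_vertex_le_1:
  assumes "graph V E" "\<not> cut_vertex V E v"
  shows "bc_degree V E v \<le> 1"
proof -
  have "finite {B. is_block V E B \<and> v \<in> B}"
    using assms(1) by (simp add: graph_def finite_blocks_containing)
  moreover have "B1 = B2" if "B1 \<in> {B. is_block V E B \<and> v \<in> B}" "B2 \<in> {B. is_block V E B \<and> v \<in> B}"
    for B1 B2
    using that blocks_eq_at_non_cut_vertex[OF assms] by blast
  ultimately show ?thesis
    unfolding bc_degree_def by (simp add: card_le_Suc0_iff_eq)
qed

lemma finite_cut_vertex_bc_degrees:
  "finite V \<Longrightarrow> finite {bc_degree V E v | v. cut_vertex V E v}"
  by (rule finite_subset[of _ "bc_degree V E ` V"]) (auto simp: cut_vertex_def)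

lemma cut_vertex_bc_degree_pos:
  assumes "graph V E" "cut_vertex V E v"
  shows "0 < bc_degree V E v"
proof -
  obtain u where "E v u"
    using assms by (rule cut_vertex_has_neighbour)
  then obtain B where "is_block V E B" "v \<in> B"
    using assms(1) by (metis edge_in_block)
  moreover have "finite {B. is_block V E B \<and> v \<in> B}"
    using assms(1) by (simp add: graph_def finite_blocks_containing)
  ultimately show ?thesis
    unfolding bc_degree_def by (auto simp: card_gt_0_iff)
qed

lemma bc_degree_le_max_cut_bc_degree:
  assumes "graph V E" "cut_vertex V E w"
  shows "bc_degree V E v \<le> max_cut_bc_degree V E"
proof -
  have fin: "finite {bc_degree V E v | v. cut_vertex V E v}"
    using assms(1) by (simp add: graph_def finite_cut_vertex_bc_degrees)
  have le_max: "bc_degree V E x \<le> max_cut_bc_degree V E" if "cut_vertex V E x" for x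
    unfolding max_cut_bc_degree_def by (rule Max_ge[OF fin]) (use that in blast)
  show ?thesis
  proof (cases "cut_vertex V E v")
    case True
    then show ?thesis by (rule le_max)
  next
    case False
    then have "bc_degree V E v \<le> 1"
      using assms(1) by (intro bc_degree_non_cut_vertex_le_1)
    also have "1 \<le> max_cut_bc_degree V E"
      using cut_vertex_bc_degree_pos[OF assms] le_max[OF assms(2)] by simp
    finally show ?thesis .
  qed
qed

lemma card_neighbours_le:
  assumes "graph V E"
  shows "card {u. E v u} \<le> bc_degree V E v * (max_block_size V E - 1)"
proof -
  define Bs where "Bs = {B. is_block V E B \<and> v \<in> B}"
  have fin_V: "finite V"
    using assms by (simp add: graph_def)
  have fin_Bs: "finite Bs"
    using fin_V by (simp add: Bs_def finite_blocks_containing)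
  have "{u. E v u} \<subseteq> (\<Union>B\<in>Bs. B - {v})"
  proof
    fix u
    assume "u \<in> {u. E v u}"
    then have "E v u" "u \<noteq> v"
      using assms by (auto simp: graph_def)
    then show "u \<in> (\<Union>B\<in>Bs. B - {v})"
      using assms by (auto simp: Bs_def elim: edge_in_block)
  qed
  moreover have "finite (\<Union>B\<in>Bs. B - {v})"
    by (rule finite_subset[OF _ fin_V]) (auto simp: Bs_def is_block_def nonsep_def)
  ultimately have "card {u. E v u} \<le> card (\<Union>B\<in>Bs. B - {v})"
    by (intro card_mono)
  also have "\<dots> \<le> (\<Sum>B\<in>Bs. card (B - {v}))"
    using fin_Bs by (rule card_UN_le)
  also have "\<dots> \<le> (\<Sum>B\<in>Bs. max_block_size V E - 1)"
  proof (rule sum_mono)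
    fix B
    assume "B \<in> Bs"
    then have "card B \<le> max_block_size V E" "v \<in> B"
      using card_block_le_max_block_size[OF fin_V] by (auto simp: Bs_def)
    then show "card (B - {v}) \<le> max_block_size V E - 1"
      by simp
  qed
  also have "\<dots> = bc_degree V E v * (max_block_size V E - 1)"
    by (simp add: Bs_def bc_degree_def)
  finally show ?thesis .
qed

section \<open>Grundy colourings\<close>

lemma grundy_coloring_le_Suc_degree:
  assumes "graph V E" "grundy_coloring V E c k" "0 < k"
  obtains w where "k \<le> Suc (card {u. E w u})"
proof -
  obtain w where w: "w \<in> V" "c w = k"
    using assms(2,3) unfolding grundy_coloring_def by force
  have "{1..<k} \<subseteq> c ` {u. E w u}"
    using assms(2) w unfolding grundy_coloring_def by force
  then have "card {1..<k} \<le> card {u. E w u}"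
    using finite_neighbours[OF assms(1)] surj_card_le by blast
  then have "k \<le> Suc (card {u. E w u})"
    by simp
  then show thesis
    by (rule that)
qed

lemma grundy_coloring_Max_colour:
  assumes "finite V" "V \<noteq> {}" "\<forall>v\<in>V. 1 \<le> c v" "\<forall>u\<in>V. \<forall>v\<in>V. E u v \<longrightarrow> c u \<noteq> c v"
    and greedy: "\<forall>v\<in>V. \<forall>i. 1 \<le> i \<and> i < c v \<longrightarrow> (\<exists>u\<in>V. E v u \<and> c u = i)"
  shows "grundy_coloring V E c (Max (c ` V))"
proof -
  let ?k = "Max (c ` V)"
  have "?k \<in> c ` V"
    using assms(1,2) by (intro Max_in) auto
  then obtain w where w: "w \<in> V" "c w = ?k"
    by (metis imageE)
  have "c v \<in> {1..?k}" if "v \<in> V" for v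
    using that assms(1,3) by simp
  moreover have "\<exists>v\<in>V. c v = i" if "i \<in> {1..?k}" for i
    using that w greedy by (cases "i = ?k") (auto, fastforce)
  ultimately show ?thesis
    unfolding grundy_coloring_def using assms(4) greedy by blast
qed

lemma grundy_coloring_exists:
  assumes "graph V E" "V \<noteq> {}"
  obtains c k where "grundy_coloring V E c k"
proof -
  have fin: "finite V"
    using assms(1) by (simp add: graph_def)
  define proper where
    "proper c \<longleftrightarrow> (\<forall>v\<in>V. 1 \<le> c v) \<and> (\<forall>u\<in>V. \<forall>v\<in>V. E u v \<longrightarrow> c u \<noteq> c v)"
    for c :: "'a \<Rightarrow> nat"
  obtain f :: "'a \<Rightarrow> nat" where "inj_on f V"
    using finite_imp_inj_to_nat_seg[OF fin] by blast
  then have "proper (\<lambda>x. Suc (f x))"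
    using assms(1) by (auto simp: proper_def graph_def dest: inj_onD)
  then obtain c where c: "proper c" and min: "\<And>c'. proper c' \<Longrightarrow> sum c V \<le> sum c' V"
    using ex_has_least_nat[of proper _ "\<lambda>c. sum c V"] by blast
  \<comment> \<open>A vertex missing a smaller colour among its neighbours could be recoloured with it,
    lowering the colour sum.\<close>
  have "\<exists>u\<in>V. E x u \<and> c u = i" if x: "x \<in> V" and i: "1 \<le> i" "i < c x" for x i
  proof (rule ccontr)
    assume missing: "\<not> (\<exists>u\<in>V. E x u \<and> c u = i)"
    have "proper (c(x := i))"
      using c i missing graph_symp[OF assms(1)] graph_def[of V E] assms(1)
      unfolding proper_def by (auto dest: sympD)
    moreover have "sum (c(x := i)) V < sum c V"
      using fin x i by (intro sum_strict_mono_ex1) auto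
    ultimately show False
      using min by fastforce
  qed
  then have "grundy_coloring V E c (Max (c ` V))"
    using fin assms(2) c unfolding proper_def by (intro grundy_coloring_Max_colour) auto
  then show thesis
    by (rule that)
qed

lemma grundy_coloring_le_block_bound:
  assumes "graph V E" "cut_vertex V E x" "grundy_coloring V E c k"
  shows "k \<le> (max_block_size V E - 1) * max_cut_bc_degree V E + 1"
proof (cases "k = 0")
  case False
  then have "0 < k"
    by simp
  then obtain w where k: "k \<le> Suc (card {u. E w u})"
    by (rule grundy_coloring_le_Suc_degree[OF assms(1,3)])
  have "card {u. E w u} \<le> bc_degree V E w * (max_block_size V E - 1)"
    using assms(1) by (rule card_neighbours_le)
  also have "\<dots> \<le> max_cut_bc_degree V E * (max_block_size V E - 1)"
    using bc_degree_le_max_cut_bc_degree[OF assms(1,2)] by (rule mult_right_mono) simp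
  finally show ?thesis
    using k by (simp add: mult.commute)
qed simp

theorem corollary1:
  fixes V :: "'a set" and E :: "'a \<Rightarrow> 'a \<Rightarrow> bool"
  assumes "graph V E"
    and "\<exists>v. cut_vertex V E v"
  shows "grundy_number V E \<le> (max_block_size V E - 1) * max_cut_bc_degree V E + 1"
proof -
  let ?K = "{k. \<exists>c. grundy_coloring V E c k}"
  let ?bound = "(max_block_size V E - 1) * max_cut_bc_degree V E + 1"
  obtain x where cut: "cut_vertex V E x"
    using assms(2) by blast
  have bounded: "k \<le> ?bound" if "k \<in> ?K" for k
    using that grundy_coloring_le_block_bound[OF assms(1) cut] by blast
  then have fin: "finite ?K"
    by (meson atMost_iff finite_atMost finite_subset subsetI)
  have "V \<noteq> {}"
    using cut by (auto simp: cut_vertex_def)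
  then have "?K \<noteq> {}"
    using assms(1) grundy_coloring_exists by blast
  with fin show ?thesis
    unfolding grundy_number_def using bounded by (rule Max.boundedI)
qed

end
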